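(* Let $\mathcal{Q}=\mathcal{Q}_\ell(T,X,Y)$ and let $\sigma^{\mathcal{Q}}$ be the least monoid congruence on $\mathcal{Q}$ containing $Y\times Y$. If $\alpha=h_1h_2\cdots h_n\in\mathcal{Q}$ is in $H^{\mathcal{P}}$-canonical form, where $h_i=s_ie_i\in H^{\mathcal{Q}}$ ($s_i\in T$, $e_i\in Y$) for $1\le i\le n$, then there exists $e\in Y$ with $s_1s_2\cdots s_n\cdot e\in Y$ and $\alpha\,\sigma^{\mathcal{Q}}\,s_1s_2\cdots s_ne$.
   Context: Let $T$ be a monoid, $X$ a semilattice with identity $1_X$ (ordered by $e\le f$ iff $ef=e$) with an order-preserving left action of $T$. $\mathcal{P}_\ell(T,X)$: let $T*X$ be the semigroup free product acting on $X$ (elements of $X$ act by multiplication), $\omega^+=\omega\cdot1_X$, $\sim$ the semigroup congruence generated by $\{(\alpha^+\alpha,\alpha)\}\cup\{(1_T,1_X)\}$, and $\mathcal{P}_\ell(T,X)=(T*X)/\sim$ with $[\alpha]^+=[\alpha^+]$; $X$, $T$ are identified with their injective images. It is a left Ehresmann monoid with projections $X$, unique $T$-normal forms $t_0e_1t_1\cdots e_nt_n$ ($n\ge0$, $e_i\in X\setminus\{1\}$, $t_1,\dots,t_{n-1}\in T\setminus\{1\}$, $e_i<(t_ie_{i+1}\cdots e_nt_n)^+$), and unary operation $a^*=e_n$ if $n\ge1$, $t_n=1$, and $a^*=1$ otherwise. $H^{\mathcal{P}}=\{te:t\in T,e\in X\}$; an $H^{\mathcal{P}}$-canonical form is an expression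 $h_1\cdots h_n$, $h_i\in H^{\mathcal{P}}$, with $h_i^*<h_{i+1}^+$ ($1\le i<n$) and $h_i\notin X$ ($2\le i\le n$). Let $Y$ be a subsemilattice of $X$ having an identity, satisfying (A): for all $t\in T$, $e,f\in Y$ with $e\le f$, $t\cdot f\in Y$ implies $t\cdot e\in Y$; (B): for all $t\in T$ there is $g\in Y$ with $t\cdot g\in Y$. $H^{\mathcal{Q}}=\{te:t\in T,e\in Y,t\cdot e\in Y\}$, and $\mathcal{Q}_\ell(T,X,Y)$ is the subsemigroup of $\mathcal{P}_\ell(T,X)$ generated by $H^{\mathcal{Q}}$; it is a monoid with identity the identity of $Y$. *)

theory Defs
  imports Main
begin

text \<open>
  X is a semilattice with identity,
  rendered as a meet-semilattice with top: product e f = inf e f, identity 1_X = top,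
  and the order e <= f iff inf e f = e is the order of the type class.

  Elements of the semigroup free product T*X are represented by (nonempty) words over
  'a + 'x (Inl for letters of T, Inr for letters of X); the free product is the quotient
  of this free semigroup by merging adjacent letters from the same factor.
\<close>

type_synonym ('a, 'x) word = "('a + 'x) list"

definition wact :: "('a \<Rightarrow> 'x \<Rightarrow> 'x) \<Rightarrow> ('a, 'x::semilattice_inf) word \<Rightarrow> 'x \<Rightarrow> 'x" where
  "wact act w x = foldr (\<lambda>l y. case l of Inl t \<Rightarrow> act t y | Inr e \<Rightarrow> inf e y) w x"

definition pplus :: "('a \<Rightarrow> 'x \<Rightarrow> 'x) \<Rightarrow> ('a, 'x::bounded_semilattice_inf_top) word \<Rightarrow> 'x" where
  "pplus act w = wact act w top"

text \<open>The congruence on words whose quotient is P_l(T,X): generated by the free-product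
  merging relations (so that we work in T*X), the pairs (alpha^+ alpha, alpha), and (1_T, 1_X).\<close>
inductive Pc :: "('a::monoid_mult \<Rightarrow> 'x::bounded_semilattice_inf_top \<Rightarrow> 'x)
    \<Rightarrow> ('a, 'x) word \<Rightarrow> ('a, 'x) word \<Rightarrow> bool" for act where
  mergeT: "Pc act [Inl s, Inl t] [Inl (s * t)]"
| mergeX: "Pc act [Inr e, Inr f] [Inr (inf e f)]"
| plus: "w \<noteq> [] \<Longrightarrow> Pc act (Inr (pplus act w) # w) w"
| unit: "Pc act [Inl 1] [Inr top]"
| refl: "Pc act w w"
| sym: "Pc act u v \<Longrightarrow> Pc act v u"
| trans: "Pc act u v \<Longrightarrow> Pc act v w \<Longrightarrow> Pc act u w"
| compat: "Pc act u v \<Longrightarrow> Pc act (p @ u @ q) (p @ v @ q)"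

text \<open>T-normal forms t_0 e_1 t_1 ... e_n t_n, represented as (t_0, [(e_1,t_1),...,(e_n,t_n)]).\<close>
definition nfword :: "'a \<times> ('x \<times> 'a) list \<Rightarrow> ('a, 'x) word" where
  "nfword nf = Inl (fst nf) # concat (map (\<lambda>(e, t). [Inr e, Inl t]) (snd nf))"

definition is_Tnf :: "('a::monoid_mult \<Rightarrow> 'x::bounded_semilattice_inf_top \<Rightarrow> 'x)
    \<Rightarrow> 'a \<times> ('x \<times> 'a) list \<Rightarrow> bool" where
  "is_Tnf act nf \<longleftrightarrow>
     (let ps = snd nf; n = length ps in
       (\<forall>i<n. fst (ps ! i) \<noteq> top) \<and>
       (\<forall>i. i + 1 < n \<longrightarrow> snd (ps ! i) \<noteq> 1) \<and>
       (\<forall>i<n. fst (ps ! i) <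
           pplus act (nfword (snd (ps ! i), drop (Suc i) ps))))"

definition nfstar :: "'a::monoid_mult \<times> ('x::bounded_semilattice_inf_top \<times> 'a) list \<Rightarrow> 'x" where
  "nfstar nf = (if snd nf \<noteq> [] \<and> snd (last (snd nf)) = 1 then fst (last (snd nf)) else top)"

text \<open>The unary operation a^* of P_l(T,X), read off the unique T-normal form of a.\<close>
definition pstar :: "('a::monoid_mult \<Rightarrow> 'x::bounded_semilattice_inf_top \<Rightarrow> 'x)
    \<Rightarrow> ('a, 'x) word \<Rightarrow> 'x" where
  "pstar act w = (THE x. \<exists>nf. is_Tnf act nf \<and> Pc act w (nfword nf) \<and> nfstar nf = x)"

definition hw :: "'a \<times> 'x \<Rightarrow> ('a, 'x) word" where
  "hw h = [Inl (fst h), Inr (snd h)]"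

definition HQ :: "('a \<Rightarrow> 'x \<Rightarrow> 'x) \<Rightarrow> 'x set \<Rightarrow> ('a \<times> 'x) set" where
  "HQ act Y = {(t, e). e \<in> Y \<and> act t e \<in> Y}"

definition Qw :: "('a::monoid_mult \<Rightarrow> 'x::bounded_semilattice_inf_top \<Rightarrow> 'x) \<Rightarrow> 'x set
    \<Rightarrow> ('a, 'x) word set" where
  "Qw act Y = {w. \<exists>hs. hs \<noteq> [] \<and> set hs \<subseteq> HQ act Y \<and> Pc act w (concat (map hw hs))}"

text \<open>sigma^Q: the least (monoid) congruence on Q containing Y x Y, as a relation on words of Q
  (which contains the identification of P).\<close>
inductive sigmaQ :: "('a::monoid_mult \<Rightarrow> 'x::bounded_semilattice_inf_top \<Rightarrow> 'x) \<Rightarrow> 'x set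
    \<Rightarrow> ('a, 'x) word \<Rightarrow> ('a, 'x) word \<Rightarrow> bool" for act Y where
  eq: "u \<in> Qw act Y \<Longrightarrow> v \<in> Qw act Y \<Longrightarrow> Pc act u v \<Longrightarrow> sigmaQ act Y u v"
| YY: "e \<in> Y \<Longrightarrow> f \<in> Y \<Longrightarrow> sigmaQ act Y [Inr e] [Inr f]"
| sym: "sigmaQ act Y u v \<Longrightarrow> sigmaQ act Y v u"
| trans: "sigmaQ act Y u v \<Longrightarrow> sigmaQ act Y v w \<Longrightarrow> sigmaQ act Y u w"
| left: "sigmaQ act Y u v \<Longrightarrow> p \<in> Qw act Y \<Longrightarrow> sigmaQ act Y (p @ u) (p @ v)"
| right: "sigmaQ act Y u v \<Longrightarrow> q \<in> Qw act Y \<Longrightarrow> sigmaQ act Y (u @ q) (v @ q)"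

end

theory Submission
  imports Defs
begin

(* Each generator s e of Q is sigma-related to s f for every other admissible f, since both
   are related to s (e f) via the pair (f, e) in Y x Y.  So modulo sigma only the T-parts
   matter, and two generators s e, t f multiply to s t f' for a suitable f' in Y: shrink f
   to f' with s t . f' in Y (condition (B), then (A)), replace e by the projection
   (t f')^+ = t . f', and let the identity (t f')^+ t f' = t f' of P absorb it.  Induction
   on the number of generators finishes the proof. *)

declare Pc.trans [trans] sigmaQ.trans [trans]

lemma Pc_append:
  assumes "Pc act u u'" and "Pc act v v'"
  shows "Pc act (u @ v) (u' @ v')"
proof -
  have "Pc act ([] @ u @ v) ([] @ u' @ v)" by (rule Pc.compat[OF assms(1)])
  moreover have "Pc act (u' @ v @ []) (u' @ v' @ [])" by (rule Pc.compat[OF assms(2)])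
  ultimately show ?thesis using Pc.trans by simp
qed

lemma Qw_Pc_closed: "Pc act u v \<Longrightarrow> v \<in> Qw act Y \<Longrightarrow> u \<in> Qw act Y"
  unfolding Qw_def by (blast intro: Pc.trans)

lemma Qw_append:
  assumes "u \<in> Qw act Y" and "v \<in> Qw act Y"
  shows "u @ v \<in> Qw act Y"
proof -
  obtain hs1 where hs1: "hs1 \<noteq> []" "set hs1 \<subseteq> HQ act Y" "Pc act u (concat (map hw hs1))"
    using assms(1) unfolding Qw_def by blast
  obtain hs2 where hs2: "hs2 \<noteq> []" "set hs2 \<subseteq> HQ act Y" "Pc act v (concat (map hw hs2))"
    using assms(2) unfolding Qw_def by blast
  have "Pc act (u @ v) (concat (map hw (hs1 @ hs2)))"
    using Pc_append[OF hs1(3) hs2(3)] by simp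
  then show ?thesis
    unfolding Qw_def using hs1 hs2 by (intro CollectI exI[of _ "hs1 @ hs2"]) auto
qed

lemma HQ_in_Qw: "(s, e) \<in> HQ act Y \<Longrightarrow> [Inl s, Inr e] \<in> Qw act Y"
  unfolding Qw_def hw_def by (intro CollectI exI[of _ "[(s, e)]"]) (auto intro: Pc.refl)

lemma sigmaQ_if_Pc: "Pc act u v \<Longrightarrow> v \<in> Qw act Y \<Longrightarrow> sigmaQ act Y u v"
  by (rule sigmaQ.eq[OF Qw_Pc_closed])

lemma pplus_generator: "pplus act [Inl s, Inr e] = act s e"
  by (simp add: pplus_def wact_def)

locale Q_setting =
  fixes act :: "'a::monoid_mult \<Rightarrow> 'x::bounded_semilattice_inf_top \<Rightarrow> 'x"
    and Y :: "'x set"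
  assumes act_one: "\<And>x. act 1 x = x"
    and act_mult: "\<And>s t x. act (s * t) x = act s (act t x)"
    and Y_inf: "\<And>e f. e \<in> Y \<Longrightarrow> f \<in> Y \<Longrightarrow> inf e f \<in> Y"
    and condA: "\<And>t e f. e \<in> Y \<Longrightarrow> f \<in> Y \<Longrightarrow> e \<le> f \<Longrightarrow> act t f \<in> Y \<Longrightarrow> act t e \<in> Y"
    and condB: "\<And>t. \<exists>g\<in>Y. act t g \<in> Y"
begin

lemma HQ_inf:
  assumes "(s, e) \<in> HQ act Y" and "g \<in> Y"
  shows "(s, inf e g) \<in> HQ act Y"
  using assms Y_inf condA[of "inf e g" e s] by (simp add: HQ_def)

lemma projection_in_Qw:
  assumes "e \<in> Y"
  shows "[Inr e] \<in> Qw act Y"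
proof -
  have "Pc act [Inl 1, Inr e] [Inr top, Inr e]"
    using Pc.compat[OF Pc.unit, where p="[]" and q="[Inr e]"] by simp
  also have "Pc act \<dots> [Inr (inf top e)]" by (rule Pc.mergeX)
  also have "[Inr (inf top e)] = [Inr e]" by simp
  finally have "Pc act [Inr e] [Inl 1, Inr e]" by (simp add: Pc.sym)
  moreover have "(1, e) \<in> HQ act Y" using assms by (simp add: HQ_def act_one)
  ultimately show ?thesis by (blast intro: Qw_Pc_closed HQ_in_Qw)
qed

lemma sigmaQ_generator_inf:
  assumes se: "(s, e) \<in> HQ act Y" and g: "g \<in> Y"
  shows "sigmaQ act Y [Inl s, Inr (inf e g)] [Inl s, Inr e]"
proof -
  have e: "e \<in> Y" using se by (simp add: HQ_def)
  have merge: "Pc act ([Inl s] @ [Inr e, Inr f] @ []) ([Inl s] @ [Inr (inf e f)] @ [])" for f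
    by (rule Pc.compat[OF Pc.mergeX])
  have "sigmaQ act Y [Inl s, Inr (inf e g)] ([Inl s, Inr e] @ [Inr g])"
    using Pc.sym[OF merge[of g]] Qw_append[OF HQ_in_Qw[OF se] projection_in_Qw[OF g]]
    by (simp add: sigmaQ_if_Pc)
  also have "sigmaQ act Y \<dots> ([Inl s, Inr e] @ [Inr e])"
    by (rule sigmaQ.left[OF sigmaQ.YY[OF g e] HQ_in_Qw[OF se]])
  also have "sigmaQ act Y \<dots> [Inl s, Inr e]"
    using merge[of e] by (simp add: sigmaQ_if_Pc HQ_in_Qw[OF se])
  finally show ?thesis .
qed

lemma sigmaQ_generator_same_fst:
  assumes "(s, e) \<in> HQ act Y" and "(s, f) \<in> HQ act Y"
  shows "sigmaQ act Y [Inl s, Inr e] [Inl s, Inr f]"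
proof -
  have "e \<in> Y" "f \<in> Y" using assms by (auto simp: HQ_def)
  then show ?thesis
    using sigmaQ_generator_inf[OF assms(1) \<open>f \<in> Y\<close>] sigmaQ_generator_inf[OF assms(2) \<open>e \<in> Y\<close>]
    by (metis inf_commute sigmaQ.sym sigmaQ.trans)
qed

lemma sigmaQ_generator_mult:
  assumes se: "(s, e) \<in> HQ act Y" and tf: "(t, f) \<in> HQ act Y"
  shows "\<exists>f'\<in>Y. act (s * t) f' \<in> Y \<and>
           sigmaQ act Y [Inl s, Inr e, Inl t, Inr f] [Inl (s * t), Inr f']"
proof -
  obtain g where g: "g \<in> Y" "act (s * t) g \<in> Y" using condB by blast
  define f' where "f' = inf f g"
  define k where "k = act t f'"
  have tf': "(t, f') \<in> HQ act Y" unfolding f'_def by (rule HQ_inf[OF tf g(1)])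
  have f'_Y: "f' \<in> Y" and stf'_Y: "act (s * t) f' \<in> Y"
    using tf' g condA[of f' g "s * t"] by (auto simp: HQ_def f'_def)
  have sk: "(s, k) \<in> HQ act Y"
    using tf' stf'_Y by (simp add: HQ_def k_def act_mult)
  have "sigmaQ act Y ([Inl s, Inr e] @ [Inl t, Inr f]) ([Inl s, Inr e] @ [Inl t, Inr f'])"
    by (rule sigmaQ.left[OF sigmaQ_generator_same_fst[OF tf tf'] HQ_in_Qw[OF se]])
  also have "sigmaQ act Y \<dots> ([Inl s, Inr k] @ [Inl t, Inr f'])"
    by (rule sigmaQ.right[OF sigmaQ_generator_same_fst[OF se sk] HQ_in_Qw[OF tf']])
  also have "sigmaQ act Y \<dots> [Inl (s * t), Inr f']"
  proof (rule sigmaQ_if_Pc)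
    have "Pc act ([Inl s] @ (Inr k # [Inl t, Inr f']) @ []) ([Inl s] @ [Inl t, Inr f'] @ [])"
      using Pc.compat[OF Pc.plus[of "[Inl t, Inr f']"], where p="[Inl s]" and q="[]"]
      by (simp add: pplus_generator k_def)
    moreover have "Pc act ([] @ [Inl s, Inl t] @ [Inr f']) ([] @ [Inl (s * t)] @ [Inr f'])"
      by (rule Pc.compat[OF Pc.mergeT])
    ultimately show "Pc act ([Inl s, Inr k] @ [Inl t, Inr f']) [Inl (s * t), Inr f']"
      using Pc.trans by simp
    show "[Inl (s * t), Inr f'] \<in> Qw act Y"
      using f'_Y stf'_Y by (simp add: HQ_in_Qw HQ_def)
  qed
  finally show ?thesis using f'_Y stf'_Y by (auto intro: sigmaQ.trans)
qed

lemma sigmaQ_concat_generators: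
  assumes "hs \<noteq> []" and "set hs \<subseteq> HQ act Y"
  shows "\<exists>e\<in>Y. act (prod_list (map fst hs)) e \<in> Y \<and>
           sigmaQ act Y (concat (map hw hs)) [Inl (prod_list (map fst hs)), Inr e]"
  using assms
proof (induction hs rule: list_nonempty_induct)
  case (single h)
  obtain s e where h: "h = (s, e)" by (cases h)
  then have "(s, e) \<in> HQ act Y" using single by simp
  then have "sigmaQ act Y [Inl s, Inr e] [Inl s, Inr e]"
    by (simp add: sigmaQ_if_Pc Pc.refl HQ_in_Qw)
  then show ?case using \<open>(s, e) \<in> HQ act Y\<close> h by (auto simp: hw_def HQ_def)
next
  case (cons h hs)
  obtain s e where h: "h = (s, e)" by (cases h)
  have se: "(s, e) \<in> HQ act Y" using cons.prems h by simp
  let ?t = "prod_list (map fst hs)"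
  obtain f where f: "(?t, f) \<in> HQ act Y"
    and hs_f: "sigmaQ act Y (concat (map hw hs)) [Inl ?t, Inr f]"
    using cons.IH cons.prems by (auto simp: HQ_def)
  obtain f' where f': "f' \<in> Y" "act (s * ?t) f' \<in> Y"
    and prod_f': "sigmaQ act Y [Inl s, Inr e, Inl ?t, Inr f] [Inl (s * ?t), Inr f']"
    using sigmaQ_generator_mult[OF se f] by blast
  have "sigmaQ act Y ([Inl s, Inr e] @ concat (map hw hs)) ([Inl s, Inr e] @ [Inl ?t, Inr f])"
    by (rule sigmaQ.left[OF hs_f HQ_in_Qw[OF se]])
  then have "sigmaQ act Y (concat (map hw (h # hs))) [Inl (s * ?t), Inr f']"
    using sigmaQ.trans prod_f' h by (simp add: hw_def)
  then show ?case using f' h by auto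
qed

end

theorem mainTheorem16:
  fixes act :: "'a::monoid_mult \<Rightarrow> 'x::bounded_semilattice_inf_top \<Rightarrow> 'x"
    and Y :: "'x set"
    and hs :: "('a \<times> 'x) list"
  assumes act_one: "\<And>x. act 1 x = x"
    and act_mult: "\<And>s t x. act (s * t) x = act s (act t x)"
    and act_mono: "\<And>t x y. x \<le> y \<Longrightarrow> act t x \<le> act t y"
    and Y_inf: "\<And>e f. e \<in> Y \<Longrightarrow> f \<in> Y \<Longrightarrow> inf e f \<in> Y"
    and Y_id: "\<exists>u\<in>Y. \<forall>y\<in>Y. inf u y = y"
    and condA: "\<And>t e f. e \<in> Y \<Longrightarrow> f \<in> Y \<Longrightarrow> e \<le> f \<Longrightarrow> act t f \<in> Y \<Longrightarrow> act t e \<in> Y"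
    and condB: "\<And>t. \<exists>g\<in>Y. act t g \<in> Y"
    and hs_ne: "hs \<noteq> []"
    and hs_HQ: "set hs \<subseteq> HQ act Y"
    and canon_star: "\<And>i. Suc i < length hs \<Longrightarrow>
                       pstar act (hw (hs ! i)) < pplus act (hw (hs ! Suc i))"
    and canon_notX: "\<And>i. 0 < i \<Longrightarrow> i < length hs \<Longrightarrow> \<not> (\<exists>x. Pc act (hw (hs ! i)) [Inr x])"
  shows "\<exists>e\<in>Y. act (prod_list (map fst hs)) e \<in> Y \<and>
           sigmaQ act Y (concat (map hw hs)) [Inl (prod_list (map fst hs)), Inr e]"
proof -
  interpret Q_setting act Y
    using act_one act_mult Y_inf condA condB by unfold_locales
  show ?thesis using sigmaQ_concat_generators[OF hs_ne hs_HQ] .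
qed

end
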